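(* Let $p$ be an odd prime and $q\ge1$ an integer. Let $m,k$ be nonnegative integers and $r,s$ integers with $r\ge s\ge q$ and $kp^s\le mp^r$. Let $e_0=v_p\!\left(\binom{mp^r}{kp^s}\right)$ be the exponent of $p$ dividing $\binom{mp^r}{kp^s}$. Then $$\frac{1}{p^{e_0}}\binom{mp^r}{kp^s}\equiv\frac{1}{p^{e_0}}\binom{mp^{r-1}}{kp^{s-1}}\pmod{p^q}$$ (as a congruence in the $p$-adic integers).
   Context: $v_p$ denotes the $p$-adic valuation. *)

theory Defs
  imports "HOL-Computational_Algebra.Primes"
begin

end

theory Submission
  imports Defs "HOL-Number_Theory.Cong"
begin

text \<open>
  Write F(n) for the product of the integers in [1, n] that are not divisible by p. Splitting
  off the multiples of p gives (ap)! = p^a a! F(ap), hence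
  F(bp) F((a-b)p) C(ap, bp) = C(a, b) F(ap).
  If p^q divides (a-b)p, the factors of F(ap) beyond (a-b)p repeat those of F(bp) modulo p^q,
  so F(ap) = F(bp) F((a-b)p) mod p^q. All these products are units at p, so C(ap, bp) and
  C(a, b) have the same p-adic valuation e and agree modulo p^(e+q).
  Taking a = m p^(r-1), b = k p^(s-1) gives the corollary.
\<close>

definition prime_free_fact :: "nat \<Rightarrow> nat \<Rightarrow> nat" where
  "prime_free_fact p n = (\<Prod>j\<in>{1..n}. if p dvd j then 1 else j)"

lemma prime_free_fact_0 [simp]: "prime_free_fact p 0 = 1"
  by (simp add: prime_free_fact_def)

lemma prime_free_fact_Suc:
  "prime_free_fact p (Suc n) = prime_free_fact p n * (if p dvd Suc n then 1 else Suc n)"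
  unfolding prime_free_fact_def by (simp add: atLeastAtMostSuc_conv mult.commute)

lemma coprime_prime_free_fact:
  assumes "prime p"
  shows "coprime p (prime_free_fact p n)"
proof (induction n)
  case (Suc n)
  have "coprime p (if p dvd Suc n then 1 else Suc n)"
    using assms prime_imp_coprime by auto
  with Suc show ?case by (simp add: prime_free_fact_Suc)
qed simp

lemma fact_eq_prime_free_fact:
  assumes "p > 0"
  shows "fact n = p ^ (n div p) * fact (n div p) * prime_free_fact p n"
proof (induction n)
  case (Suc n)
  show ?case
  proof (cases "p dvd Suc n")
    case True
    then have div: "Suc n div p = Suc (n div p)"
      using assms by (simp add: div_Suc dvd_eq_mod_eq_0)
    have Suc_n: "Suc n = p * Suc (n div p)"
      using True div by (metis dvd_mult_div_cancel)
    have "fact (Suc n) = Suc n * (fact n :: nat)" by simp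
    also have "\<dots> = p * Suc (n div p) * (p ^ (n div p) * fact (n div p) * prime_free_fact p n)"
      using Suc Suc_n by simp
    also have "\<dots> = p ^ (Suc n div p) * fact (Suc n div p) * prime_free_fact p (Suc n)"
      unfolding div using True
      by (simp only: prime_free_fact_Suc if_True fact_Suc power_Suc of_nat_id mult_1_right ac_simps)
    finally show ?thesis .
  next
    case False
    then have "Suc n div p = n div p"
      using assms by (simp add: div_Suc dvd_eq_mod_eq_0)
    with Suc False show ?thesis by (simp add: prime_free_fact_Suc algebra_simps)
  qed
qed simp

lemma fact_mult_eq_prime_free_fact:
  assumes "p > 0"
  shows "fact (a * p) = p ^ a * fact a * prime_free_fact p (a * p)"
  using fact_eq_prime_free_fact[OF assms, of "a * p"] assms by simp

text \<open>The factor j of the product on (N, N + M] is congruent to j - N modulo p^q, and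
  p divides one iff it divides the other.\<close>
lemma prime_free_fact_add_cong:
  assumes "p dvd N" "p ^ q dvd N"
  shows "[prime_free_fact p (N + M) = prime_free_fact p N * prime_free_fact p M] (mod p ^ q)"
proof (induction M)
  case (Suc M)
  have dvd_iff: "p dvd Suc (N + M) \<longleftrightarrow> p dvd Suc M"
    using assms(1) by (metis add_Suc_right dvd_add_right_iff)
  have "[N + Suc M = 0 + Suc M] (mod p ^ q)"
    using assms(2) by (intro cong_add) (simp_all add: cong_0_iff)
  then have "[(if p dvd Suc (N + M) then 1 else Suc (N + M))
            = (if p dvd Suc M then 1 else Suc M)] (mod p ^ q)"
    unfolding dvd_iff by simp
  from cong_mult[OF Suc.IH this] show ?case
    by (simp add: prime_free_fact_Suc mult.assoc)
qed simp

lemma prime_free_fact_choose_mult: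
  assumes "p > 0" "b \<le> a"
  shows "prime_free_fact p (b * p) * prime_free_fact p ((a - b) * p) * ((a * p) choose (b * p))
         = (a choose b) * prime_free_fact p (a * p)"
proof -
  let ?u = "p ^ a * fact b * fact (a - b) :: nat"
  have pow: "p ^ a = p ^ b * p ^ (a - b)"
    using assms(2) by (simp flip: power_add)
  have "?u * (prime_free_fact p (b * p) * prime_free_fact p ((a - b) * p) * ((a * p) choose (b * p)))
        = fact (b * p) * fact ((a - b) * p) * ((a * p) choose (b * p))"
    using fact_mult_eq_prime_free_fact[OF assms(1), of b]
      fact_mult_eq_prime_free_fact[OF assms(1), of "a - b"] pow
    by (simp add: ac_simps)
  also have "\<dots> = fact (a * p)"
    using binomial_fact_lemma[of "b * p" "a * p"] assms(2) by (simp add: diff_mult_distrib)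
  also have "\<dots> = p ^ a * fact a * prime_free_fact p (a * p)"
    by (rule fact_mult_eq_prime_free_fact[OF assms(1)])
  also have "\<dots> = ?u * ((a choose b) * prime_free_fact p (a * p))"
    by (simp flip: binomial_fact_lemma[OF assms(2)] add: ac_simps)
  finally show ?thesis
    using assms(1) by simp
qed

text \<open>With e the valuation of c1, p^e also divides c2 since y is a unit, and then
  x (c1 - c2) = c2 (y - x) is divisible by p^(e+q).\<close>
lemma prime_power_dvd_diff_of_unit_cross_eq:
  fixes p x y c1 c2 :: nat
  assumes eq: "x * c1 = c2 * y"
    and "coprime p x" "coprime p y"
    and "[x = y] (mod p ^ q)"
  shows "int p ^ (multiplicity p c1 + q) dvd int c1 - int c2"
proof -
  define e where "e = multiplicity p c1"
  have "p ^ e dvd c2 * y"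
    unfolding e_def using eq multiplicity_dvd[of p c1] by (metis dvd_mult2 mult.commute)
  then have "p ^ e dvd c2"
    using \<open>coprime p y\<close> by (simp add: coprime_dvd_mult_left_iff)
  then have c2: "int p ^ e dvd int c2"
    by (metis of_nat_dvd_iff of_nat_power)
  have "[int y = int x] (mod int p ^ q)"
    using assms(4) by (metis cong_int_iff cong_sym of_nat_power)
  then have xy: "int p ^ q dvd int y - int x"
    by (metis cong_iff_dvd_diff cong_sym)
  have "int p ^ (e + q) dvd int x * (int c1 - int c2)"
  proof -
    have "int x * (int c1 - int c2) = int c2 * (int y - int x)"
      using arg_cong[OF eq, of int] by (simp add: algebra_simps)
    then show ?thesis
      using mult_dvd_mono[OF c2 xy] by (simp add: power_add)
  qed
  moreover have "coprime (int p ^ (e + q)) (int x)"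
    using \<open>coprime p x\<close> by simp
  ultimately show ?thesis
    unfolding e_def using coprime_dvd_mult_right_iff by blast
qed

lemma prime_power_dvd_choose_mult_diff:
  fixes p a b q :: nat
  assumes "prime p" "b \<le> a" "p ^ q dvd (a - b) * p"
  shows "int p ^ (multiplicity p ((a * p) choose (b * p)) + q) dvd
           int ((a * p) choose (b * p)) - int (a choose b)"
proof (rule prime_power_dvd_diff_of_unit_cross_eq)
  have p: "p > 0" using assms(1) prime_gt_0_nat by blast
  show "prime_free_fact p (b * p) * prime_free_fact p ((a - b) * p) * ((a * p) choose (b * p))
        = (a choose b) * prime_free_fact p (a * p)"
    by (rule prime_free_fact_choose_mult[OF p assms(2)])
  show "coprime p (prime_free_fact p (b * p) * prime_free_fact p ((a - b) * p))"
    "coprime p (prime_free_fact p (a * p))"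
    using coprime_prime_free_fact[OF assms(1)] by simp_all
  have "a * p = (a - b) * p + b * p"
    using assms(2) by (simp flip: add_mult_distrib)
  then have "[prime_free_fact p (a * p)
              = prime_free_fact p ((a - b) * p) * prime_free_fact p (b * p)] (mod p ^ q)"
    using prime_free_fact_add_cong[of p "(a - b) * p" q "b * p"] assms(3) by simp
  then show "[prime_free_fact p (b * p) * prime_free_fact p ((a - b) * p)
              = prime_free_fact p (a * p)] (mod p ^ q)"
    by (simp add: cong_sym mult.commute)
qed

theorem corollary15:
  fixes p q m k r s :: nat
  assumes "prime p" and "odd p" and "q \<ge> 1"
    and "s \<ge> q" and "r \<ge> s"
    and "k * p ^ s \<le> m * p ^ r"
  shows "let e0 = multiplicity p ((m * p ^ r) choose (k * p ^ s)) in
    int p ^ (e0 + q) dvd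
      int ((m * p ^ r) choose (k * p ^ s)) - int ((m * p ^ (r - 1)) choose (k * p ^ (s - 1)))"
proof -
  define a where "a = m * p ^ (r - 1)"
  define b where "b = k * p ^ (s - 1)"
  have ap: "a * p = m * p ^ r" and bp: "b * p = k * p ^ s"
    unfolding a_def b_def using assms(3-5) by (simp_all add: mult.assoc flip: power_Suc2)
  have "b \<le> a"
    using assms(6) prime_gt_0_nat[OF assms(1)] by (simp flip: ap bp)
  have "p ^ q dvd m * p ^ r" "p ^ q dvd k * p ^ s"
    using assms(4,5) by (simp_all add: le_imp_power_dvd)
  then have "p ^ q dvd (a - b) * p"
    by (simp add: diff_mult_distrib ap bp dvd_diff_nat)
  from prime_power_dvd_choose_mult_diff[OF assms(1) \<open>b \<le> a\<close> this]
  show ?thesis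
    by (simp only: Let_def ap bp flip: a_def b_def)
qed

end
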